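(* Let $q\in\mathbb C_p$ with $|1-q|_p<p^{-1/(p-1)}$ ($p$ an odd prime). For $m,n\in\mathbb Z_+$ with $m\le n$, $$\binom nm(q-1)^m=\sum_{k=m}^n(q-1)^k\binom nk_q s_{1,q}(k,m).$$
   Context: $[x]_q=\frac{1-q^x}{1-q}$; $[n]_q!=[n]_q\cdots[1]_q$ ($[0]_q!=1$), $\binom nk_q=\frac{[n]_q!}{[k]_q![n-k]_q!}$. The $q$-Stirling numbers of the first kind $s_{1,q}(k,l)$ are defined by $[x]_q[x-1]_q\cdots[x-k+1]_q=q^{-\binom k2}\sum_{l=0}^k s_{1,q}(k,l)[x]_q^l$ for $k\in\mathbb Z_+$, as an identity of polynomials in $[x]_q$ (using $[x-i]_q=q^{-i}([x]_q-[i]_q)$). *)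

theory Defs
  imports "HOL-Computational_Algebra.Polynomial" "HOL-Computational_Algebra.Primes"
begin

text \<open>An absolute value v on a field 'a which makes it a model of C_p:
  characteristic 0, nonarchimedean, normalised by v p = 1/p, complete and
  algebraically closed.  C_p is such a field; the theorem is stated for every such field.\<close>

definition Cp_like :: "nat \<Rightarrow> ('a::field \<Rightarrow> real) \<Rightarrow> bool" where
  "Cp_like p v \<longleftrightarrow>
     CHAR('a) = 0 \<and>
     (\<forall>x. v x \<ge> 0) \<and> (\<forall>x. v x = 0 \<longleftrightarrow> x = 0) \<and>
     (\<forall>x y. v (x * y) = v x * v y) \<and>
     (\<forall>x y. v (x + y) \<le> max (v x) (v y)) \<and>
     v (of_nat p) = 1 / real p \<and>
     (\<forall>X :: nat \<Rightarrow> 'a. (\<forall>e>0. \<exists>N. \<forall>a\<ge>N. \<forall>b\<ge>N. v (X a - X b) < e) \<longrightarrow>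
          (\<exists>L. \<forall>e>0. \<exists>N. \<forall>n\<ge>N. v (X n - L) < e)) \<and>
     (\<forall>P :: 'a poly. degree P > 0 \<longrightarrow> (\<exists>x. poly P x = 0))"

text \<open>q-integer [n]_q = (1-q^n)/(1-q) = 1 + q + ... + q^(n-1) (also valid at q = 1).\<close>
definition qint :: "'a::field \<Rightarrow> nat \<Rightarrow> 'a" where
  "qint q n = (\<Sum>i<n. q ^ i)"

definition qfact :: "'a::field \<Rightarrow> nat \<Rightarrow> 'a" where
  "qfact q n = (\<Prod>i=1..n. qint q i)"

definition qbinom :: "'a::field \<Rightarrow> nat \<Rightarrow> nat \<Rightarrow> 'a" where
  "qbinom q n k = qfact q n / (qfact q k * qfact q (n - k))"

text \<open>q-Stirling numbers of the first kind: since
  [x]_q[x-1]_q...[x-k+1]_q = q^(-binom k 2) prod_{i<k} ([x]_q - [i]_q),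
  s_{1,q}(k,l) is the coefficient of t^l in prod_{i<k} (t - [i]_q).\<close>
definition s1q :: "'a::field \<Rightarrow> nat \<Rightarrow> nat \<Rightarrow> 'a" where
  "s1q q k l = coeff (\<Prod>i<k. [:- qint q i, 1:]) l"

end

theory Submission
  imports Defs
begin

text \<open>Substituting x = 1 + (q - 1) t into the q-analogue of Newton's interpolation formula
  x^n = \<Sum>_k [n,k]_q \<Prod>_{i<k} (x - q^i) turns each factor into (q - 1)(t - [i]_q), so
  comparing coefficients of t^m gives the identity. The Gaussian binomial [n,k]_q here comes
  from the q-Pascal rule; it equals the quotient of q-factorials as soon as no [i]_q with
  i \<ge> 1 vanishes, i.e. as soon as q is not a nontrivial root of unity. That is what
  |1 - q|_p < p^(-1/(p-1)) guarantees: if \<zeta> \<noteq> 1 has prime order l, expanding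
  ((\<zeta> - 1) + 1)^l = 1 and dividing by \<zeta> - 1 writes 0 as l plus terms of absolute value
  strictly below |l|_p, the only delicate one being (\<zeta> - 1)^(p-1) when l = p.
  A nontrivial root of unity close to 1 has a power that is one of prime order and
  still close to 1.\<close>

text \<open>Unlike qbinom, this involves no division, which would give junk values when some
  q-factorial vanishes.\<close>

fun gauss_binom :: "'a::comm_ring_1 \<Rightarrow> nat \<Rightarrow> nat \<Rightarrow> 'a" where
  "gauss_binom q 0 0 = 1"
| "gauss_binom q 0 (Suc k) = 0"
| "gauss_binom q (Suc n) 0 = 1"
| "gauss_binom q (Suc n) (Suc k) = gauss_binom q n k + q ^ Suc k * gauss_binom q n (Suc k)"

lemma gauss_binom_eq_0: "n < k \<Longrightarrow> gauss_binom q n k = 0"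
  by (induction q n k rule: gauss_binom.induct) auto

lemma gauss_binom_const_poly: "gauss_binom [:q:] n k = [:gauss_binom q n k:]"
  by (induction q n k rule: gauss_binom.induct) (simp_all add: poly_const_pow mult_to_poly)

theorem q_binomial_newton:
  fixes x q :: "'a::comm_ring_1"
  shows "x ^ n = (\<Sum>k\<le>n. gauss_binom q n k * (\<Prod>i<k. x - q ^ i))"
proof (induction n)
  case 0
  show ?case by simp
next
  case (Suc n)
  define F where "F k = (\<Prod>i<k. x - q ^ i)" for k
  have x_F: "x * F k = F (Suc k) + q ^ k * F k" for k
    by (simp add: F_def algebra_simps)
  have shift: "(\<Sum>k\<le>n. gauss_binom q n k * q ^ k * F k)
      = 1 + (\<Sum>k\<le>n. q ^ Suc k * gauss_binom q n (Suc k) * F (Suc k))"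
  proof -
    have "(\<Sum>k\<le>n. gauss_binom q n k * q ^ k * F k)
        = (\<Sum>k\<le>Suc n. gauss_binom q n k * q ^ k * F k)"
      by (simp add: gauss_binom_eq_0)
    also have "\<dots> = 1 + (\<Sum>k\<le>n. q ^ Suc k * gauss_binom q n (Suc k) * F (Suc k))"
      by (subst sum.atMost_Suc_shift) (cases n, simp_all add: F_def ac_simps)
    finally show ?thesis .
  qed
  have "x ^ Suc n = (\<Sum>k\<le>n. gauss_binom q n k * (x * F k))"
    by (simp add: Suc.IH F_def sum_distrib_left ac_simps)
  also have "\<dots> = (\<Sum>k\<le>n. gauss_binom q n k * F (Suc k))
                  + (\<Sum>k\<le>n. gauss_binom q n k * q ^ k * F k)"
    by (simp add: x_F distrib_left sum.distrib ac_simps)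
  also have "\<dots> = 1 + (\<Sum>k\<le>n. gauss_binom q (Suc n) (Suc k) * F (Suc k))"
    by (simp add: shift sum.distrib distrib_right)
  also have "\<dots> = (\<Sum>k\<le>Suc n. gauss_binom q (Suc n) k * F k)"
    by (subst sum.atMost_Suc_shift) (simp add: F_def)
  finally show ?case by (simp add: F_def)
qed

lemma qint_add: "qint q (a + b) = qint q a + q ^ a * qint q b"
  by (induction b) (simp_all add: qint_def algebra_simps power_add)

lemma q_minus_1_mult_qint: "(q - 1) * qint q i = q ^ i - 1"
  by (induction i) (simp_all add: qint_def algebra_simps)

lemma qfact_Suc: "qfact q (Suc n) = qfact q n * qint q (Suc n)"
  by (simp add: qfact_def)

lemma gauss_binom_mult_qfact:
  "k \<le> n \<Longrightarrow> gauss_binom q n k * qfact q k * qfact q (n - k) = qfact q n"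
proof (induction n arbitrary: k)
  case 0
  then show ?case by (simp add: qfact_def)
next
  case (Suc n)
  show ?case
  proof (cases k)
    case 0
    then show ?thesis by (simp add: qfact_def)
  next
    case (Suc j)
    have left: "gauss_binom q n j * qfact q (Suc j) * qfact q (n - j) = qfact q n * qint q (Suc j)"
      using Suc.IH[of j] Suc.prems Suc by (simp add: qfact_Suc algebra_simps)
    have right: "gauss_binom q n (Suc j) * qfact q (Suc j) * qfact q (n - j)
        = qfact q n * qint q (n - j)"
    proof (cases "Suc j \<le> n")
      case True
      then have "qfact q (n - j) = qfact q (n - Suc j) * qint q (n - j)"
        by (metis Suc_diff_Suc Suc_le_lessD qfact_Suc)
      then show ?thesis using Suc.IH[OF True] by (simp add: algebra_simps)
    next
      case False
      then show ?thesis using Suc Suc.prems by (simp add: gauss_binom_eq_0 qint_def)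
    qed
    have "gauss_binom q (Suc n) k * qfact q k * qfact q (Suc n - k)
        = gauss_binom q n j * qfact q (Suc j) * qfact q (n - j)
          + q ^ Suc j * (gauss_binom q n (Suc j) * qfact q (Suc j) * qfact q (n - j))"
      using Suc by (simp add: algebra_simps)
    also have "\<dots> = qfact q n * (qint q (Suc j) + q ^ Suc j * qint q (n - j))"
      unfolding left right by (simp add: algebra_simps)
    also have "qint q (Suc j) + q ^ Suc j * qint q (n - j) = qint q (Suc n)"
      using qint_add[of q "Suc j" "n - j"] Suc Suc.prems by simp
    finally show ?thesis by (simp add: qfact_Suc)
  qed
qed

lemma gauss_binom_eq_qbinom:
  assumes "\<And>i. 0 < i \<Longrightarrow> qint q i \<noteq> 0" and "k \<le> n"
  shows "gauss_binom q n k = qbinom q n k"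
proof -
  have "qfact q j \<noteq> 0" for j
    using assms(1) by (auto simp: qfact_def)
  then show ?thesis
    using gauss_binom_mult_qfact[OF assms(2), of q] by (simp add: qbinom_def field_simps)
qed

lemma s1q_eq_0: "k < l \<Longrightarrow> s1q q k l = 0"
  unfolding s1q_def by (rule coeff_eq_0) (simp add: degree_prod_eq_sum_degree)

lemma q_binomial_newton_poly:
  "[:1, q - 1:] ^ n = (\<Sum>k\<le>n. smult (gauss_binom q n k * (q - 1) ^ k) (\<Prod>i<k. [:- qint q i, 1:]))"
proof -
  have const_poly_mult: "[:c:] * p = smult c p" for c :: 'a and p
    by simp
  have factor: "[:1, q - 1:] - [:q:] ^ i = smult (q - 1) [:- qint q i, 1:]" for i
    using q_minus_1_mult_qint[of q i] by (simp add: poly_const_pow algebra_simps)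
  have "[:1, q - 1:] ^ n = (\<Sum>k\<le>n. [:gauss_binom q n k:] * (\<Prod>i<k. [:1, q - 1:] - [:q:] ^ i))"
    using q_binomial_newton[of "[:1, q - 1:]" n "[:q:]"] by (simp add: gauss_binom_const_poly)
  also have "\<dots> = (\<Sum>k\<le>n. smult (gauss_binom q n k * (q - 1) ^ k) (\<Prod>i<k. [:- qint q i, 1:]))"
    by (simp only: factor prod_smult prod_constant card_lessThan smult_smult const_poly_mult)
  finally show ?thesis .
qed

theorem choose_mult_power_eq_sum_qbinom_s1q:
  assumes "\<And>i. 0 < i \<Longrightarrow> qint q i \<noteq> 0" and "m \<le> n"
  shows "of_nat (n choose m) * (q - 1) ^ m
         = (\<Sum>k=m..n. (q - 1) ^ k * qbinom q n k * s1q q k m)"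
proof -
  have "of_nat (n choose m) * (q - 1) ^ m = coeff ([:1, q - 1:] ^ n) m"
    using coeff_linear_poly_power[OF assms(2), of 1 "q - 1"] by simp
  also have "\<dots> = (\<Sum>k\<le>n. (q - 1) ^ k * gauss_binom q n k * s1q q k m)"
    by (simp add: q_binomial_newton_poly coeff_sum s1q_def ac_simps)
  also have "\<dots> = (\<Sum>k=m..n. (q - 1) ^ k * gauss_binom q n k * s1q q k m)"
    by (rule sum.mono_neutral_right) (auto simp: s1q_eq_0)
  also have "\<dots> = (\<Sum>k=m..n. (q - 1) ^ k * qbinom q n k * s1q q k m)"
    by (rule sum.cong) (simp_all add: gauss_binom_eq_qbinom[OF assms(1)])
  finally show ?thesis .
qed

locale nonarchimedean_absval =
  fixes v :: "'a::field \<Rightarrow> real"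
  assumes nonneg: "v x \<ge> 0"
    and eq_0_iff: "v x = 0 \<longleftrightarrow> x = 0"
    and mult: "v (x * y) = v x * v y"
    and add_le_max: "v (x + y) \<le> max (v x) (v y)"
begin

lemma zero [simp]: "v 0 = 0"
  by (simp add: eq_0_iff)

lemma one [simp]: "v 1 = 1"
proof -
  have "v 1 * v 1 = v 1 * 1"
    using mult[of 1 1] by simp
  moreover have "v 1 \<noteq> 0"
    by (simp add: eq_0_iff)
  ultimately show ?thesis
    by (metis mult_left_cancel)
qed

lemma minus [simp]: "v (- x) = v x"
proof -
  have "v (-1) * v (-1) = 1"
    using mult[of "-1" "-1"] by simp
  then have "v (-1) = 1"
    using nonneg[of "-1"] by (metis abs_of_nonneg abs_square_eq_1 power2_eq_square)
  then show ?thesis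
    using mult[of "-1" x] by simp
qed

lemma power: "v (x ^ n) = v x ^ n"
  by (induction n) (simp_all add: mult)

lemma of_nat_le_1: "v (of_nat n) \<le> 1"
proof (induction n)
  case (Suc n)
  then show ?case
    using add_le_max[of 1 "of_nat n"] by simp
qed simp

lemma sum_le:
  "finite A \<Longrightarrow> M \<ge> 0 \<Longrightarrow> (\<And>a. a \<in> A \<Longrightarrow> v (f a) \<le> M) \<Longrightarrow> v (sum f A) \<le> M"
  by (induction A rule: finite_induct) (use add_le_max order_trans in fastforce)+

lemma sum_less:
  "finite A \<Longrightarrow> M > 0 \<Longrightarrow> (\<And>a. a \<in> A \<Longrightarrow> v (f a) < M) \<Longrightarrow> v (sum f A) < M"
  by (induction A rule: finite_induct) (use add_le_max order_le_less_trans in fastforce)+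

lemma add_neq_0: "v y < v x \<Longrightarrow> x + y \<noteq> 0"
  by (metis add_eq_0_iff less_irrefl minus)

lemma power_diff_1_le:
  assumes "v (x - 1) \<le> 1"
  shows "v (x ^ n - 1) \<le> v (x - 1)"
proof -
  have "v x \<le> 1"
    using add_le_max[of "x - 1" 1] assms by simp
  then have "v (qint x n) \<le> 1"
    unfolding qint_def by (intro sum_le) (simp_all add: power nonneg power_le_one)
  then have "v (x - 1) * v (qint x n) \<le> v (x - 1)"
    using nonneg by (simp add: mult_left_le)
  then show ?thesis
    by (simp flip: mult q_minus_1_mult_qint)
qed

end

lemma root_of_unity_binomial_sum:
  fixes w :: "'a::field"
  assumes "w ^ l = 1" and "w \<noteq> 1"
  shows "(\<Sum>k<l. of_nat (l choose Suc k) * (w - 1) ^ k) = 0"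
proof -
  have "1 = ((w - 1) + 1) ^ l"
    using assms(1) by simp
  also have "\<dots> = (\<Sum>k\<le>l. of_nat (l choose k) * (w - 1) ^ k)"
    using binomial_ring[of "w - 1" 1 l] by simp
  also have "\<dots> = 1 + (w - 1) * (\<Sum>k<l. of_nat (l choose Suc k) * (w - 1) ^ k)"
    by (simp add: sum.atMost_shift sum_distrib_left ac_simps)
  finally show ?thesis
    using assms(2) by simp
qed

definition padic_exp_radius :: "nat \<Rightarrow> real" where
  "padic_exp_radius p = real p powr (- 1 / (real p - 1))"

lemma padic_exp_radius_less_1: "1 < p \<Longrightarrow> padic_exp_radius p < 1"
  unfolding padic_exp_radius_def by (intro powr_less_one) (auto simp: divide_neg_pos)

lemma padic_exp_radius_power: "1 < p \<Longrightarrow> padic_exp_radius p ^ (p - 1) = 1 / real p"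
  by (simp add: padic_exp_radius_def powr_realpow [symmetric] powr_powr powr_neg_one)

locale padic_absval = nonarchimedean_absval v for v :: "'a::field \<Rightarrow> real" +
  fixes p :: nat
  assumes prime: "prime p"
    and of_nat_p: "v (of_nat p) = 1 / real p"
begin

lemma p_gt_1: "1 < p"
  using prime prime_gt_1_nat by blast

lemma of_nat_not_dvd:
  assumes "\<not> p dvd d"
  shows "v (of_nat d) = 1"
proof -
  obtain x y where "d * x = p * y + 1"
    using bezout_nat[of d p] prime_imp_coprime[OF prime assms] assms
    by (metis coprime_iff_gcd_eq_1 dvd_0_right gcd.commute)
  then have "1 = of_nat d * of_nat x + - (of_nat p * of_nat y :: 'a)"
    by (metis add_diff_cancel_left' diff_conv_add_uminus of_nat_add of_nat_mult of_nat_1)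
  then have "1 \<le> max (v (of_nat d) * v (of_nat x :: 'a)) (v (of_nat p) * v (of_nat y :: 'a))"
    using add_le_max by (metis minus mult one)
  moreover have "v (of_nat p) * v (of_nat y :: 'a) < 1"
    using of_nat_p of_nat_le_1[of y] p_gt_1 by (simp add: divide_le_eq_1 mult_le_one)
  ultimately have "1 \<le> v (of_nat d) * v (of_nat x :: 'a)"
    by linarith
  also have "\<dots> \<le> v (of_nat d)"
    using of_nat_le_1[of x] nonneg[of "of_nat d"] by (simp add: mult_left_le)
  finally show ?thesis
    using of_nat_le_1[of d] by simp
qed

lemma prime_root_of_unity_eq_1:
  assumes l: "prime l" and w: "w ^ l = 1" and close: "v (w - 1) < padic_exp_radius p"
  shows "w = 1"
proof (rule ccontr)
  assume "w \<noteq> 1"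
  define y where "y = w - 1"
  obtain l' where l': "l = Suc l'"
    using l by (cases l) auto
  define f where "f k = of_nat (l choose Suc (Suc k)) * y ^ Suc k" for k
  have y_small: "v y < 1"
    using close padic_exp_radius_less_1[OF p_gt_1] y_def by simp
  have "of_nat l + sum f {..<l'} = (\<Sum>k<l. of_nat (l choose Suc k) * y ^ k)"
    unfolding l' f_def by (subst sum.lessThan_Suc_shift) simp
  also have "\<dots> = 0"
    using root_of_unity_binomial_sum[OF w \<open>w \<noteq> 1\<close>] y_def by simp
  finally have vanish: "of_nat l + sum f {..<l'} = 0" .
  have f_le: "v (f k) \<le> v (of_nat (l choose Suc (Suc k)) :: 'a) * v y" for k
    unfolding f_def mult power using nonneg y_small
    by (intro mult_left_mono) (simp_all add: mult_left_le power_le_one)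
  have "v (sum f {..<l'}) < v (of_nat l)"
  proof (cases "p dvd l")
    case False
    have "v (f k) < 1" for k
      using f_le[of k] of_nat_le_1[of "l choose Suc (Suc k)"] nonneg y_small
      by (meson mult_left_le_one_le le_less_trans)
    then show ?thesis
      using of_nat_not_dvd[OF False] by (intro sum_less) simp_all
  next
    case True
    then have lp: "l = p"
      using primes_dvd_imp_eq[OF prime l] by simp
    have "v (f k) < 1 / real p" if "k < l'" for k
    proof (cases "Suc (Suc k) = l")
      case True
      then have "v (f k) = v y ^ (p - 1)"
        using lp by (auto simp: f_def mult power)
      also have "\<dots> < padic_exp_radius p ^ (p - 1)"
        using close y_def nonneg lp l' that by (intro power_strict_mono) auto
      finally show ?thesis
        using padic_exp_radius_power[OF p_gt_1] by simp
    next
      case False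
      then have "l dvd (l choose Suc (Suc k))"
        using l l' that by (intro dvd_choose_prime) auto
      then obtain c where "l choose Suc (Suc k) = l * c" ..
      then have "v (of_nat (l choose Suc (Suc k)) :: 'a) \<le> 1 / real p"
        using of_nat_p lp of_nat_le_1[of c] by (simp add: mult divide_right_mono)
      then have "v (f k) \<le> 1 / real p * v y"
        using f_le[of k] nonneg[of y] by (meson mult_right_mono order_trans)
      also have "\<dots> < 1 / real p"
        using y_small p_gt_1 by (simp add: divide_strict_right_mono)
      finally show ?thesis .
    qed
    then show ?thesis
      using of_nat_p lp p_gt_1 by (intro sum_less) simp_all
  qed
  then show False
    using add_neq_0 vanish by blast
qed

lemma root_of_unity_eq_1:
  assumes "x ^ d = 1" and "0 < d" and close: "v (x - 1) < padic_exp_radius p"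
  shows "x = 1"
  using assms(1,2)
proof (induction d rule: less_induct)
  case (less d)
  show ?case
  proof (cases "d = 1")
    case True
    then show ?thesis
      using less.prems by simp
  next
    case False
    then obtain l e where l: "prime l" and d: "d = l * e"
      using prime_factor_nat[of d] by (metis dvdE)
    have "e < d" and "0 < e"
      using d less.prems(2) prime_gt_1_nat[OF l] by auto
    have "(x ^ e) ^ l = 1"
      using less.prems(1) d by (simp flip: power_mult add: mult.commute)
    moreover have "v (x ^ e - 1) < padic_exp_radius p"
      using power_diff_1_le[of x e] close padic_exp_radius_less_1[OF p_gt_1] by simp
    ultimately have "x ^ e = 1"
      by (rule prime_root_of_unity_eq_1[OF l])
    then show ?thesis
      using less.IH[OF \<open>e < d\<close>] \<open>0 < e\<close> by blast
  qed
qed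

lemma qint_neq_0:
  assumes "CHAR('a) = 0" and "v (q - 1) < padic_exp_radius p" and "0 < i"
  shows "qint q i \<noteq> 0"
proof
  assume "qint q i = 0"
  then have "q ^ i = 1"
    using q_minus_1_mult_qint[of q i] by simp
  then have "q = 1"
    using root_of_unity_eq_1 assms(2,3) by blast
  then show False
    using \<open>qint q i = 0\<close> assms(1,3) of_nat_eq_0_iff_char_dvd[of i, where 'a='a]
    by (simp add: qint_def)
qed

end

lemma Cp_like_imp_padic_absval:
  assumes "Cp_like p v" and "prime p"
  shows "padic_absval v p"
  using assms by unfold_locales (simp_all add: Cp_like_def)

theorem mainTheorem3:
  fixes p :: nat and v :: "'a::field \<Rightarrow> real" and q :: 'a and m n :: nat
  assumes "prime p" and "odd p"
    and "Cp_like p v"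
    and "v (1 - q) < real p powr (- 1 / (real p - 1))"
    and "1 \<le> m" and "m \<le> n"
  shows "of_nat (n choose m) * (q - 1) ^ m
         = (\<Sum>k=m..n. (q - 1) ^ k * qbinom q n k * s1q q k m)"
proof (rule choose_mult_power_eq_sum_qbinom_s1q)
  interpret padic_absval v p
    using Cp_like_imp_padic_absval[OF assms(3,1)] .
  have "v (q - 1) < padic_exp_radius p"
    using assms(4) minus[of "q - 1"] by (simp add: padic_exp_radius_def)
  moreover have "CHAR('a) = 0"
    using assms(3) by (simp add: Cp_like_def)
  ultimately show "qint q i \<noteq> 0" if "0 < i" for i
    using qint_neq_0 that by blast
qed (fact assms(6))

end
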